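(* Let $\mathcal{T}\subset\mathcal{D}$ be a tree and $\mu,\nu$ finite Borel measures on $[0,1)$ such that (A) $\mu(\mathbf{Top}(\mathcal{T}))>0$ and $\nu(\mathbf{Top}(\mathcal{T}))>0$, and (B) both $\mu$ and $\nu$ are $(\mathcal{T},D)$-doubling for some $D\ge1$. Define $$\nu_{\mathcal{T}} := \nu|_{\partial\mathcal{T}} + \sum_{I\in\mathbf{Leaves}(\mathcal{T})}\frac{\nu(I)}{\mu(I)}\,\mu|_I.$$ If $$\sum_{I\in\mathcal{T}\setminus\mathbf{Leaves}(\mathcal{T})}\Delta^2_{\mu,\nu}(I)\mu(I)<\infty,$$ then $\mu|_{\mathbf{Top}(\mathcal{T})}\ll\nu_{\mathcal{T}}$. In particular $\mu|_{\partial\mathcal{T}}\ll\nu$.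
   Context: $\mathcal{D}$: dyadic intervals $[j2^{-k},(j+1)2^{-k})\subset[0,1)$, $k\ge0$; $\hat I$ is the parent of $I$, and $I_-,I_+$ are the left and right halves of $I$. $\Delta_{\mu,\nu}(I) := |\mu(I_-)/\mu(I) - \nu(I_-)/\nu(I)|$. A tree is a family $\mathcal{T}\subset\mathcal{D}$ that is coherent (if $Q,R\in\mathcal{T}$, $P\in\mathcal{D}$, $Q\subset P\subset R$, then $P\in\mathcal{T}$), has a unique largest element $\mathbf{Top}(\mathcal{T})$, and in which every $I\in\mathcal{T}$ has either $0$ or $2$ children in $\mathcal{T}$. $\mathbf{Leaves}(\mathcal{T})$ is the set of $I\in\mathcal{T}$ with no children in $\mathcal{T}$ (also used for the union of these intervals), and $\partial\mathcal{T} := \mathbf{Top}(\mathcal{T})\setminus\bigcup\mathbf{Leaves}(\mathcal{T})$. A measure $\sigma$ is $(\mathcal{T},D)$-doubling if $\sigma(\hat I)\le D\sigma(I)$ for all $I\in\mathcal{T}\setminus\{\mathbf{Top}(\mathcal{T})\}$ (under (A),(B), $\mu(I),\nu(I)>0$ for all $I\in\mathcal{T}$). *)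

theory Defs
  imports "HOL-Analysis.Analysis"
begin

text \<open>Dyadic intervals are encoded by pairs (k, j) with j < 2^k, standing for
  the half-open interval [j 2^-k, (j+1) 2^-k).\<close>

definition dyadic :: "(nat \<times> nat) set" where
  "dyadic = {(k, j). j < 2 ^ k}"

definition dyset :: "nat \<times> nat \<Rightarrow> real set" where
  "dyset I = {real (snd I) / 2 ^ fst I ..< (real (snd I) + 1) / 2 ^ fst I}"

definition dleft :: "nat \<times> nat \<Rightarrow> nat \<times> nat" where
  "dleft I = (Suc (fst I), 2 * snd I)"

definition dright :: "nat \<times> nat \<Rightarrow> nat \<times> nat" where
  "dright I = (Suc (fst I), 2 * snd I + 1)"

definition dparent :: "nat \<times> nat \<Rightarrow> nat \<times> nat" where
  "dparent I = (fst I - 1, snd I div 2)"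

definition is_tree :: "(nat \<times> nat) set \<Rightarrow> bool" where
  "is_tree T \<longleftrightarrow> T \<subseteq> dyadic
     \<and> (\<forall>Q\<in>T. \<forall>R\<in>T. \<forall>P\<in>dyadic. dyset Q \<subseteq> dyset P \<and> dyset P \<subseteq> dyset R \<longrightarrow> P \<in> T)
     \<and> (\<exists>Tp\<in>T. \<forall>I\<in>T. dyset I \<subseteq> dyset Tp)
     \<and> (\<forall>I\<in>T. (dleft I \<in> T \<longleftrightarrow> dright I \<in> T))"

definition tree_top :: "(nat \<times> nat) set \<Rightarrow> nat \<times> nat" where
  "tree_top T = (THE Tp. Tp \<in> T \<and> (\<forall>I\<in>T. dyset I \<subseteq> dyset Tp))"

definition leaves :: "(nat \<times> nat) set \<Rightarrow> (nat \<times> nat) set" where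
  "leaves T = {I \<in> T. dleft I \<notin> T \<and> dright I \<notin> T}"

definition tree_boundary :: "(nat \<times> nat) set \<Rightarrow> real set" where
  "tree_boundary T = dyset (tree_top T) - (\<Union>I\<in>leaves T. dyset I)"

definition doubling_on_tree :: "real measure \<Rightarrow> (nat \<times> nat) set \<Rightarrow> real \<Rightarrow> bool" where
  "doubling_on_tree \<sigma> T D \<longleftrightarrow>
     (\<forall>I \<in> T - {tree_top T}. measure \<sigma> (dyset (dparent I)) \<le> D * measure \<sigma> (dyset I))"

definition Delta :: "real measure \<Rightarrow> real measure \<Rightarrow> nat \<times> nat \<Rightarrow> real" where
  "Delta \<mu> \<nu> I = \<bar>measure \<mu> (dyset (dleft I)) / measure \<mu> (dyset I)
                 - measure \<nu> (dyset (dleft I)) / measure \<nu> (dyset I)\<bar>"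

definition measure_add :: "'a measure \<Rightarrow> 'a measure \<Rightarrow> 'a measure" where
  "measure_add M N = measure_of (space M) (sets M) (\<lambda>A. emeasure M A + emeasure N A)"

definition restr :: "'a measure \<Rightarrow> 'a set \<Rightarrow> 'a measure" where
  "restr M A = density M (indicator A)"

text \<open>nu_T = nu|_{boundary T} + sum over leaves I of (nu(I)/mu(I)) mu|_I\<close>
definition nu_T :: "real measure \<Rightarrow> real measure \<Rightarrow> (nat \<times> nat) set \<Rightarrow> real measure" where
  "nu_T \<mu> \<nu> T = measure_add (restr \<nu> (tree_boundary T))
      (density \<mu> (\<lambda>x. \<integral>\<^sup>+ I. ennreal (measure \<nu> (dyset I) / measure \<mu> (dyset I))
                          * indicator (dyset I) x \<partial>count_space (leaves T)))"

end

theory Submission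
  imports Defs
begin

text \<open>Write \<open>L(I) = log (\<nu>(I) / \<mu>(I))\<close>, normalised to vanish at the top. Along the tree, \<open>L\<close> is
  a \<open>\<mu>\<close>-supermartingale: its expected decrease at a node \<open>I\<close> is the Kullback--Leibler divergence of
  the splitting ratios of \<open>\<mu>\<close> and \<open>\<nu>\<close> at \<open>I\<close>, which the doubling condition bounds by
  \<open>D\<^sup>2 \<Delta>\<^sup>2(I)\<close>. Adding the accumulated divergences \<open>A\<close> gives a martingale \<open>M = L + A\<close> with
  increments at most \<open>D \<Delta>(I)\<close>, so on every generation of the tree both \<open>\<integral> M\<^sup>2 d\<mu>\<close> and
  \<open>\<integral> A d\<mu>\<close> are bounded by \<open>D\<^sup>2 \<Sum> \<Delta>\<^sup>2 \<mu>\<close>. By Chebyshev, uniformly in the generation, the intervals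
  on which \<open>\<nu>/\<mu>\<close> is exponentially small carry little \<open>\<mu>\<close>-mass.

  A compact \<open>K \<subseteq> \<partial>T\<close> with \<open>\<nu>(K) = 0\<close> is covered by the intervals of generation \<open>n\<close> that meet
  it; none of them is a leaf, so they shrink to \<open>K\<close> and their \<open>\<nu>\<close>-mass tends to 0. On the
  intervals where \<open>\<nu>/\<mu>\<close> is not small, \<open>\<mu>\<close> is controlled by \<open>\<nu>\<close>, hence \<open>\<mu>(K) = 0\<close>, and inner
  regularity shows that the restriction of \<open>\<mu>\<close> to \<open>\<partial>T\<close> is absolutely continuous with respect to
  \<open>\<nu>\<close>. On each leaf \<open>\<nu>\<^sub>T\<close> is a positive multiple of \<open>\<mu>\<close>, and the
  top interval is covered by \<open>\<partial>T\<close> and the leaves.\<close>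

section \<open>Dyadic intervals\<close>

lemma dyset_eq: "dyset (k, j) = {real j / 2 ^ k ..< (real j + 1) / 2 ^ k}"
  by (simp add: dyset_def)

lemma dyset_borel [measurable]: "dyset I \<in> sets borel"
  by (simp add: dyset_def)

lemma dyset_ends_less: "real j / 2 ^ k < (real j + 1) / 2 ^ k"
  by (simp add: divide_strict_right_mono)

lemma dyset_length: "(real j + 1) / 2 ^ k - real j / 2 ^ k = 1 / 2 ^ k"
  by (simp add: field_simps)

lemma dyset_subset_iff_ends:
  "dyset (k, j) \<subseteq> dyset (k', j') \<longleftrightarrow>
     real j' / 2 ^ k' \<le> real j / 2 ^ k \<and> (real j + 1) / 2 ^ k \<le> (real j' + 1) / 2 ^ k'"
  using dyset_ends_less[of j k] by (auto simp: dyset_eq)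

lemma divide_pow2_le_iff:
  "(x::real) / 2 ^ (k + e) \<le> y / 2 ^ k \<longleftrightarrow> x \<le> y * 2 ^ e"
  "y / 2 ^ k \<le> (x::real) / 2 ^ (k + e) \<longleftrightarrow> y * 2 ^ e \<le> x"
  by (simp_all add: power_add field_simps)

lemma div_eq_iff_bounds: "0 < (m::nat) \<Longrightarrow> j div m = q \<longleftrightarrow> q * m \<le> j \<and> j + 1 \<le> (q + 1) * m"
  by (metis Suc_eq_plus1 Suc_le_eq div_nat_eqI dividend_less_times_div mult.commute
      mult_Suc_right times_div_less_eq_dividend)

lemma dyset_subset_iff:
  assumes "k' \<le> k"
  shows "dyset (k, j) \<subseteq> dyset (k', j') \<longleftrightarrow> j div 2 ^ (k - k') = j'"
proof -
  obtain e where k: "k = k' + e"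
    using assms le_Suc_ex by blast
  have "dyset (k, j) \<subseteq> dyset (k', j') \<longleftrightarrow>
      real j' * 2 ^ e \<le> real j \<and> real j + 1 \<le> (real j' + 1) * 2 ^ e"
    unfolding dyset_subset_iff_ends k divide_pow2_le_iff ..
  also have "\<dots> \<longleftrightarrow> j' * 2 ^ e \<le> j \<and> j + 1 \<le> (j' + 1) * 2 ^ e"
    by (simp only: of_nat_le_iff[where 'a=real, symmetric] of_nat_mult of_nat_add of_nat_power
        of_nat_numeral of_nat_1)
  also have "\<dots> \<longleftrightarrow> j div 2 ^ e = j'"
    by (simp add: div_eq_iff_bounds)
  finally show ?thesis
    by (simp add: k)
qed

lemma dyset_subset_level:
  assumes "dyset (k, j) \<subseteq> dyset (k', j')"
  shows "k' \<le> k"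
proof -
  have "(real j + 1) / 2 ^ k - real j / 2 ^ k \<le> (real j' + 1) / 2 ^ k' - real j' / 2 ^ k'"
    using assms unfolding dyset_subset_iff_ends by linarith
  then have "1 / 2 ^ k \<le> (1::real) / 2 ^ k'"
    by (simp only: dyset_length)
  then have "(2::real) ^ k' \<le> 2 ^ k"
    by (simp add: field_simps)
  then show ?thesis
    by simp
qed

lemma dyset_inj:
  assumes "dyset I = dyset J"
  shows "I = J"
proof -
  obtain k j k' j' where I: "I = (k, j)" and J: "J = (k', j')"
    by (cases I, cases J)
  have "k = k'"
    using dyset_subset_level[of k j k' j'] dyset_subset_level[of k' j' k j] assms
    unfolding I J by auto
  with assms show ?thesis
    using dyset_subset_iff[of k k j j'] unfolding I J by auto
qed

lemma dparent_dleft [simp]: "dparent (dleft I) = I"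
  and dparent_dright [simp]: "dparent (dright I) = I"
  and fst_dleft [simp]: "fst (dleft I) = Suc (fst I)"
  and fst_dright [simp]: "fst (dright I) = Suc (fst I)"
  by (simp_all add: dparent_def dleft_def dright_def)

lemma dleft_ne_dright: "dleft I \<noteq> dright J"
  by (simp add: dleft_def dright_def) presburger

lemma inj_dleft: "inj dleft" and inj_dright: "inj dright"
  by (metis injI dparent_dleft) (metis injI dparent_dright)

lemma
  shows dyset_dleft_Un_dright: "dyset I = dyset (dleft I) \<union> dyset (dright I)"
    and dyset_dleft_Int_dright: "dyset (dleft I) \<inter> dyset (dright I) = {}"
proof -
  obtain k j where I: "I = (k, j)"
    by (cases I)
  have lo: "real (2 * j) / 2 ^ Suc k = real j / 2 ^ k"
    and hi: "(real (2 * j + 1) + 1) / 2 ^ Suc k = (real j + 1) / 2 ^ k"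
    and mid: "real (2 * j) + 1 = real (2 * j + 1)"
    by (simp_all add: field_simps)
  have "real j / 2 ^ k \<le> real (2 * j + 1) / 2 ^ Suc k"
    and "real (2 * j + 1) / 2 ^ Suc k \<le> (real j + 1) / 2 ^ k"
    by (simp_all add: field_simps)
  then show "dyset I = dyset (dleft I) \<union> dyset (dright I)"
    and "dyset (dleft I) \<inter> dyset (dright I) = {}"
    unfolding I dleft_def dright_def dyset_def by (simp_all only: fst_conv snd_conv lo hi mid) auto
qed

lemma dyset_child_subset: "dyset (dleft I) \<subseteq> dyset I" "dyset (dright I) \<subseteq> dyset I"
  using dyset_dleft_Un_dright[of I] by auto

lemma dyset_dist_less:
  assumes "x \<in> dyset I" "y \<in> dyset I"
  shows "dist x y < 1 / 2 ^ fst I"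
proof -
  obtain k j where I: "I = (k, j)"
    by (cases I)
  show ?thesis
    using assms dyset_length[of j k] unfolding I dyset_eq dist_real_def by auto
qed

lemma dparent_in_dyadic:
  assumes "I \<in> dyadic"
  shows "dparent I \<in> dyadic"
proof (cases I)
  case (Pair k j)
  with assms have "j < 2 ^ k"
    by (simp add: dyadic_def)
  then have "j div 2 < 2 ^ (k - 1)"
    by (cases k) (auto simp: mult.commute intro!: less_mult_imp_div_less)
  with Pair show ?thesis
    by (simp add: dyadic_def dparent_def)
qed

lemma dyset_dparent:
  assumes "dyset I \<subseteq> dyset R" "I \<noteq> R"
  shows "fst R < fst I" "dyset I \<subseteq> dyset (dparent I)" "dyset (dparent I) \<subseteq> dyset R"
proof -
  obtain k j k' j' where I: "I = (k, j)" and R: "R = (k', j')"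
    by (cases I, cases R)
  have le: "k' \<le> k"
    using assms(1) dyset_subset_level unfolding I R by blast
  moreover have "k' \<noteq> k"
    using assms dyset_subset_iff[of k k j j'] unfolding I R by auto
  ultimately have lt: "k' < k"
    by simp
  then obtain m where k: "k = Suc m" and "k' \<le> m"
    by (cases k) auto
  have P: "dparent I = (m, j div 2)"
    unfolding I k by (simp add: dparent_def)
  show "fst R < fst I"
    using lt unfolding I R by simp
  show "dyset I \<subseteq> dyset (dparent I)"
    unfolding P unfolding I k by (subst dyset_subset_iff) simp_all
  have "j div 2 div 2 ^ (m - k') = j div 2 ^ (k - k')"
    using \<open>k' \<le> m\<close> by (simp add: k Suc_diff_le div_mult2_eq)
  also have "\<dots> = j'"
    using assms(1) dyset_subset_iff[OF le] unfolding I R by blast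
  finally show "dyset (dparent I) \<subseteq> dyset R"
    unfolding P R using dyset_subset_iff[OF \<open>k' \<le> m\<close>] by simp
qed

section \<open>Trees and their generations\<close>

lemma
  assumes "is_tree T"
  shows tree_top_in: "tree_top T \<in> T"
    and tree_top_greatest: "I \<in> T \<Longrightarrow> dyset I \<subseteq> dyset (tree_top T)"
proof -
  obtain Tp where Tp: "Tp \<in> T" "\<forall>I\<in>T. dyset I \<subseteq> dyset Tp"
    using assms unfolding is_tree_def by blast
  have "\<exists>!Tp. Tp \<in> T \<and> (\<forall>I\<in>T. dyset I \<subseteq> dyset Tp)"
  proof (rule ex1I[of _ Tp])
    fix R
    assume "R \<in> T \<and> (\<forall>I\<in>T. dyset I \<subseteq> dyset R)"
    then have "dyset R = dyset Tp"
      using Tp by blast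
    then show "R = Tp"
      by (rule dyset_inj)
  qed (use Tp in blast)
  from theI'[OF this] show "tree_top T \<in> T" "I \<in> T \<Longrightarrow> dyset I \<subseteq> dyset (tree_top T)"
    unfolding tree_top_def by auto
qed

lemma tree_dparent:
  assumes T: "is_tree T" and I: "I \<in> T" "I \<noteq> tree_top T"
  shows "dparent I \<in> T" "fst (tree_top T) < fst I"
proof -
  have coherent: "\<And>Q R P. Q \<in> T \<Longrightarrow> R \<in> T \<Longrightarrow> P \<in> dyadic \<Longrightarrow>
      dyset Q \<subseteq> dyset P \<Longrightarrow> dyset P \<subseteq> dyset R \<Longrightarrow> P \<in> T"
    and "T \<subseteq> dyadic"
    using T unfolding is_tree_def by blast+
  note between = dyset_dparent[OF tree_top_greatest[OF T I(1)] I(2)]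
  show "fst (tree_top T) < fst I"
    by (fact between(1))
  show "dparent I \<in> T"
    using coherent[OF I(1) tree_top_in[OF T] dparent_in_dyadic] between(2,3) \<open>T \<subseteq> dyadic\<close> I(1)
    by blast
qed

lemma tree_level_ge_top: "is_tree T \<Longrightarrow> I \<in> T \<Longrightarrow> fst (tree_top T) \<le> fst I"
  using tree_dparent(2)[of T I] by (cases "I = tree_top T") auto

lemma leaves_subset: "leaves T \<subseteq> T"
  by (auto simp: leaves_def)

lemma tree_children_in:
  assumes "is_tree T" "I \<in> T - leaves T"
  shows "dleft I \<in> T" "dright I \<in> T"
  using assms unfolding is_tree_def leaves_def by blast+

lemma doubling_tree_measure_pos:
  assumes T: "is_tree T" and doubling: "doubling_on_tree \<sigma> T D"
    and top: "measure \<sigma> (dyset (tree_top T)) > 0" and "I \<in> T"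
  shows "measure \<sigma> (dyset I) > 0"
  using \<open>I \<in> T\<close>
proof (induction I rule: measure_induct_rule[of fst])
  case (less I)
  show ?case
  proof (cases "I = tree_top T")
    case True
    then show ?thesis
      using top by simp
  next
    case False
    note parent = tree_dparent[OF T less.prems False]
    have "fst (dparent I) < fst I"
      using parent(2) by (simp add: dparent_def)
    then have "0 < measure \<sigma> (dyset (dparent I))"
      using less.IH parent(1) by blast
    also have "\<dots> \<le> D * measure \<sigma> (dyset I)"
      using doubling less.prems False unfolding doubling_on_tree_def by blast
    finally show ?thesis
      using measure_nonneg[of \<sigma> "dyset I"] by (auto simp: zero_less_mult_iff)
  qed
qed

text \<open>The \<open>n\<close>-th generation consists of the nodes at depth \<open>n\<close> below the top together with the
  leaves of depth less than \<open>n\<close>; its intervals partition the top interval.\<close>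

fun generation :: "(nat \<times> nat) set \<Rightarrow> nat \<Rightarrow> (nat \<times> nat) set" where
  "generation T 0 = {tree_top T}"
| "generation T (Suc n) = (generation T n \<inter> leaves T)
     \<union> dleft ` (generation T n - leaves T) \<union> dright ` (generation T n - leaves T)"

lemma generation_SucE:
  assumes "I \<in> generation T (Suc n)"
  obtains J where "J \<in> generation T n"
    "(J \<in> leaves T \<and> I = J) \<or> (J \<notin> leaves T \<and> (I = dleft J \<or> I = dright J))"
proof -
  consider "I \<in> generation T n \<inter> leaves T" | "I \<in> dleft ` (generation T n - leaves T)"
    | "I \<in> dright ` (generation T n - leaves T)"
    using assms by auto
  then show thesis
    by cases (use that in blast)+
qed

lemma generation_Suc_subset:
  assumes "I \<in> generation T (Suc n)"
  obtains J where "J \<in> generation T n" "dyset I \<subseteq> dyset J"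
proof -
  obtain J where J: "J \<in> generation T n"
    "(J \<in> leaves T \<and> I = J) \<or> (J \<notin> leaves T \<and> (I = dleft J \<or> I = dright J))"
    using assms by (rule generation_SucE)
  from J(2) have "dyset I \<subseteq> dyset J"
    using dyset_child_subset[of J] by blast
  with J(1) show thesis
    by (rule that)
qed

lemma finite_generation: "finite (generation T n)"
  by (induction n) auto

lemma generation_level:
  assumes "I \<in> generation T n"
  shows "fst I \<le> fst (tree_top T) + n" "I \<notin> leaves T \<Longrightarrow> fst I = fst (tree_top T) + n"
proof -
  have "fst I \<le> fst (tree_top T) + n \<and> (I \<notin> leaves T \<longrightarrow> fst I = fst (tree_top T) + n)"
    using assms
  proof (induction n arbitrary: I)
    case (Suc n)
    obtain J where J: "J \<in> generation T n"
      "(J \<in> leaves T \<and> I = J) \<or> (J \<notin> leaves T \<and> (I = dleft J \<or> I = dright J))"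
      using Suc.prems by (rule generation_SucE)
    from J(2) show ?case
      using Suc.IH[OF J(1)] by auto
  qed simp
  then show "fst I \<le> fst (tree_top T) + n" "I \<notin> leaves T \<Longrightarrow> fst I = fst (tree_top T) + n"
    by auto
qed

lemma generation_disjoint:
  "I \<in> generation T n \<Longrightarrow> J \<in> generation T n \<Longrightarrow> I \<noteq> J \<Longrightarrow> dyset I \<inter> dyset J = {}"
proof (induction n arbitrary: I J)
  case (Suc n)
  obtain I' where I': "I' \<in> generation T n"
    "(I' \<in> leaves T \<and> I = I') \<or> (I' \<notin> leaves T \<and> (I = dleft I' \<or> I = dright I'))"
    using Suc.prems(1) by (rule generation_SucE)
  obtain J' where J': "J' \<in> generation T n"
    "(J' \<in> leaves T \<and> J = J') \<or> (J' \<notin> leaves T \<and> (J = dleft J' \<or> J = dright J'))"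
    using Suc.prems(2) by (rule generation_SucE)
  show ?case
  proof (cases "I' = J'")
    case True
    then show ?thesis
      using I'(2) J'(2) Suc.prems(3) dyset_dleft_Int_dright[of I'] by auto
  next
    case False
    have "dyset I \<subseteq> dyset I'"
      using I'(2) dyset_child_subset[of I'] by blast
    moreover have "dyset J \<subseteq> dyset J'"
      using J'(2) dyset_child_subset[of J'] by blast
    ultimately show ?thesis
      using Suc.IH[OF I'(1) J'(1) False] by blast
  qed
qed simp

definition hitting_generation :: "(nat \<times> nat) set \<Rightarrow> real set \<Rightarrow> nat \<Rightarrow> (nat \<times> nat) set" where
  "hitting_generation T K n = {J \<in> generation T n. dyset J \<inter> K \<noteq> {}}"

lemma finite_hitting_generation: "finite (hitting_generation T K n)"
  by (simp add: hitting_generation_def finite_generation)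

lemma decseq_hitting_generation: "decseq (\<lambda>n. \<Union>(dyset ` hitting_generation T K n))"
proof (rule decseq_SucI, rule subsetI)
  fix n x
  assume "x \<in> \<Union>(dyset ` hitting_generation T K (Suc n))"
  then obtain J where J: "J \<in> generation T (Suc n)" "dyset J \<inter> K \<noteq> {}" "x \<in> dyset J"
    unfolding hitting_generation_def by blast
  obtain J' where "J' \<in> generation T n" "dyset J \<subseteq> dyset J'"
    using J(1) by (rule generation_Suc_subset)
  with J show "x \<in> \<Union>(dyset ` hitting_generation T K n)"
    unfolding hitting_generation_def by blast
qed

lemma Inter_hitting_generation_subset:
  assumes K: "closed K" "K \<subseteq> tree_boundary T"
  shows "(\<Inter>n. \<Union>(dyset ` hitting_generation T K n)) \<subseteq> K"
proof
  fix x
  assume x: "x \<in> (\<Inter>n. \<Union>(dyset ` hitting_generation T K n))"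
  have "\<exists>y\<in>K. dist y x < e" if e: "e > 0" for e
  proof -
    obtain n where n: "(1 / 2) ^ n < e"
      using real_arch_pow_inv[OF e, of "1 / 2"] by auto
    obtain J y where J: "J \<in> generation T n" "x \<in> dyset J" and y: "y \<in> dyset J" "y \<in> K"
      using x unfolding hitting_generation_def by blast
    have "J \<notin> leaves T"
      using y K(2) unfolding tree_boundary_def by blast
    then have "fst J = fst (tree_top T) + n"
      using generation_level(2)[OF J(1)] by blast
    then have "(1::real) / 2 ^ fst J \<le> 1 / 2 ^ n"
      by (simp add: field_simps)
    then have "dist y x < e"
      using dyset_dist_less[OF y(1) J(2)] n by (simp add: power_one_over)
    with y(2) show ?thesis
      by blast
  qed
  then show "x \<in> K"
    using closed_approachable[OF K(1)] by blast
qed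

lemma sum_generation_Suc:
  fixes \<phi> :: "nat \<times> nat \<Rightarrow> real"
  shows "(\<Sum>J\<in>generation T (Suc n). \<phi> J) = (\<Sum>J\<in>generation T n. \<phi> J)
      + (\<Sum>J\<in>generation T n - leaves T. \<phi> (dleft J) + \<phi> (dright J) - \<phi> J)"
proof -
  define P where "P = generation T n"
  define L where "L = leaves T"
  have fin: "finite P"
    unfolding P_def by (rule finite_generation)
  have deeper: "fst J < fst (dleft K)" "fst J < fst (dright K)" if "J \<in> P" "K \<in> P - L" for J K
    using that generation_level unfolding P_def L_def by fastforce+
  have "dleft K \<notin> P" "dright K \<notin> P" if "K \<in> P - L" for K
    using that deeper(1)[of "dleft K" K] deeper(2)[of "dright K" K] by auto
  then have disjoint: "(P \<inter> L) \<inter> dleft ` (P - L) = {}"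
    "(P \<inter> L \<union> dleft ` (P - L)) \<inter> dright ` (P - L) = {}"
    using dleft_ne_dright by blast+
  have "(\<Sum>J\<in>generation T (Suc n). \<phi> J)
      = (\<Sum>J\<in>P \<inter> L. \<phi> J) + (\<Sum>J\<in>dleft ` (P - L). \<phi> J) + (\<Sum>J\<in>dright ` (P - L). \<phi> J)"
    unfolding generation.simps P_def[symmetric] L_def[symmetric]
    using fin
    by (simp add: sum.union_disjoint[OF _ _ disjoint(1)] sum.union_disjoint[OF _ _ disjoint(2)])
  also have "\<dots> = (\<Sum>J\<in>P \<inter> L. \<phi> J) + (\<Sum>J\<in>P - L. \<phi> (dleft J)) + (\<Sum>J\<in>P - L. \<phi> (dright J))"
    using sum.reindex[OF inj_on_subset[OF inj_dleft], of "P - L" \<phi>]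
      sum.reindex[OF inj_on_subset[OF inj_dright], of "P - L" \<phi>] by simp
  also have "\<dots> = (\<Sum>J\<in>P. \<phi> J) + (\<Sum>J\<in>P - L. \<phi> (dleft J) + \<phi> (dright J) - \<phi> J)"
    using sum.Int_Diff[OF fin, of \<phi> L] by (simp add: sum.distrib sum_subtractf)
  finally show ?thesis
    unfolding P_def L_def .
qed

context
  fixes T assumes tree: "is_tree T"
begin

lemma generation_subset: "generation T n \<subseteq> T"
proof (induction n)
  case (Suc n)
  then show ?case
    using tree_children_in[OF tree] leaves_subset by auto
qed (simp add: tree_top_in[OF tree])

lemma generation_covers_boundary:
  assumes "x \<in> tree_boundary T"
  shows "\<exists>J \<in> generation T n - leaves T. x \<in> dyset J"
proof (induction n)
  case 0
  then show ?case
    using assms tree_top_in[OF tree] unfolding tree_boundary_def by auto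
next
  case (Suc n)
  then obtain J where J: "J \<in> generation T n - leaves T" "x \<in> dyset J"
    by blast
  have not_leaf: "x \<notin> dyset K" if "K \<in> leaves T" for K
    using assms that unfolding tree_boundary_def by blast
  consider "x \<in> dyset (dleft J)" | "x \<in> dyset (dright J)"
    using J(2) dyset_dleft_Un_dright by blast
  then show ?case
  proof cases
    case 1
    with not_leaf have "dleft J \<notin> leaves T"
      by blast
    with 1 J(1) show ?thesis
      by (intro bexI[of _ "dleft J"]) auto
  next
    case 2
    with not_leaf have "dright J \<notin> leaves T"
      by blast
    with 2 J(1) show ?thesis
      by (intro bexI[of _ "dright J"]) auto
  qed
qed

lemma subset_hitting_generation:
  assumes "K \<subseteq> tree_boundary T"
  shows "K \<subseteq> \<Union>(dyset ` hitting_generation T K n)"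
  using assms generation_covers_boundary unfolding hitting_generation_def by blast

end

lemma ln_diff_le_abs_div:
  assumes "(c::real) > 0" "c \<le> x" "c \<le> y"
  shows "\<bar>ln x - ln y\<bar> \<le> \<bar>x - y\<bar> / c"
proof -
  have one_sided: "ln x - ln y \<le> \<bar>x - y\<bar> / c" if "c \<le> x" "c \<le> y" for x y
  proof -
    have pos: "x > 0" "y > 0"
      using assms(1) that by auto
    have "ln x - ln y = ln (x / y)"
      using pos by (simp add: ln_div)
    also have "\<dots> \<le> x / y - 1"
      using pos by (intro ln_le_minus_one) auto
    also have "\<dots> = (x - y) / y"
      using pos by (simp add: field_simps)
    also have "\<dots> \<le> \<bar>x - y\<bar> / y"
      using pos by (intro divide_right_mono) auto
    also have "\<dots> \<le> \<bar>x - y\<bar> / c"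
      using pos assms(1) that by (intro divide_left_mono) auto
    finally show ?thesis .
  qed
  show ?thesis
    using one_sided[OF assms(2,3)] one_sided[OF assms(3,2)] by (simp add: abs_minus_commute)
qed

lemma mult_ln_div_bounds:
  fixes p q :: real
  assumes "p > 0" "q > 0"
  shows "p * ln (q / p) \<le> q - p" "- (p * ln (q / p)) \<le> p * (p - q) / q"
proof -
  have "p * ln (q / p) \<le> p * (q / p - 1)"
    using assms by (intro mult_left_mono ln_le_minus_one) auto
  moreover have "p * (q / p - 1) = q - p"
    using assms by (simp add: field_simps)
  ultimately show "p * ln (q / p) \<le> q - p"
    by simp
  have "p * ln (p / q) \<le> p * (p / q - 1)"
    using assms by (intro mult_left_mono ln_le_minus_one) auto
  moreover have "ln (p / q) = - ln (q / p)"
    using assms by (simp add: ln_div)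
  moreover have "p * (p / q - 1) = p * (p - q) / q"
    using assms by (simp add: field_simps)
  ultimately show "- (p * ln (q / p)) \<le> p * (p - q) / q"
    by simp
qed

text \<open>The quantity \<open>-(a xl + (1 - a) xr)\<close> below is the Kullback--Leibler divergence of the
  Bernoulli law with parameter \<open>b\<close> from the one with parameter \<open>a\<close>.\<close>

lemma binary_kl_bounds:
  fixes a b D :: real
  assumes D: "D > 0" and a: "1 / D \<le> a" "1 / D \<le> 1 - a" and b: "1 / D \<le> b" "1 / D \<le> 1 - b"
  defines "xl \<equiv> ln b - ln a" and "xr \<equiv> ln (1 - b) - ln (1 - a)"
  shows "\<bar>xl\<bar> \<le> D * \<bar>a - b\<bar>" "\<bar>xr\<bar> \<le> D * \<bar>a - b\<bar>"
    "0 \<le> -(a * xl + (1 - a) * xr)" "-(a * xl + (1 - a) * xr) \<le> D\<^sup>2 * (a - b)\<^sup>2"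
proof -
  have c: "1 / D > 0"
    using D by simp
  have scale: "\<bar>x - y\<bar> / (1 / D) = D * \<bar>x - y\<bar>" for x y
    by simp
  show "\<bar>xl\<bar> \<le> D * \<bar>a - b\<bar>"
    unfolding xl_def using ln_diff_le_abs_div[OF c b(1) a(1)] scale
    by (simp add: abs_minus_commute mult.commute)
  show "\<bar>xr\<bar> \<le> D * \<bar>a - b\<bar>"
    unfolding xr_def using ln_diff_le_abs_div[OF c b(2) a(2)] scale
    by (simp add: abs_minus_commute mult.commute)
  have pos: "a > 0" "1 - a > 0" "b > 0" "1 - b > 0"
    using a b c by linarith+
  have xl: "xl = ln (b / a)" and xr: "xr = ln ((1 - b) / (1 - a))"
    unfolding xl_def xr_def using pos by (simp_all add: ln_div)
  show "0 \<le> -(a * xl + (1 - a) * xr)"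
    using mult_ln_div_bounds(1)[of a b] mult_ln_div_bounds(1)[of "1 - a" "1 - b"] pos
    unfolding xl xr by linarith
  have "-(a * xl + (1 - a) * xr) \<le> a * (a - b) / b + (1 - a) * ((1 - a) - (1 - b)) / (1 - b)"
    using mult_ln_div_bounds(2)[of a b] mult_ln_div_bounds(2)[of "1 - a" "1 - b"] pos
    unfolding xl xr by linarith
  also have "\<dots> = (a - b)\<^sup>2 / (b * (1 - b))"
    using pos by (simp add: field_simps power2_eq_square)
  also have "\<dots> \<le> D\<^sup>2 * (a - b)\<^sup>2"
  proof -
    have "(1 / D) * (1 / D) \<le> b * (1 - b)"
      using b c pos by (intro mult_mono) auto
    then have "1 / (b * (1 - b)) \<le> D\<^sup>2"
      using c pos by (simp add: field_simps power2_eq_square)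
    then show ?thesis
      using mult_right_mono[of "1 / (b * (1 - b))" "D\<^sup>2" "(a - b)\<^sup>2"] by simp
  qed
  finally show "-(a * xl + (1 - a) * xr) \<le> D\<^sup>2 * (a - b)\<^sup>2" .
qed

text \<open>The condition on \<open>k\<close> says that \<open>M + xl + k\<close>, \<open>M + xr + k\<close> average to \<open>M\<close> under the
  weights \<open>ml\<close>, \<open>mr\<close>: one step of a martingale with increments bounded by \<open>B\<close>.\<close>

lemma square_increment_le:
  fixes ml mr m M xl xr k B :: real
  assumes "ml + mr = m" "0 \<le> ml" "0 \<le> mr" "k * m = -(ml * xl + mr * xr)"
    and "\<bar>xl\<bar> \<le> B" "\<bar>xr\<bar> \<le> B"
  shows "ml * (M + xl + k)\<^sup>2 + mr * (M + xr + k)\<^sup>2 \<le> m * M\<^sup>2 + m * B\<^sup>2"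
proof -
  have "ml * (M + xl + k)\<^sup>2 + mr * (M + xr + k)\<^sup>2
      = (ml + mr) * (M + k)\<^sup>2 + 2 * (M + k) * (ml * xl + mr * xr) + ml * xl\<^sup>2 + mr * xr\<^sup>2"
    by (simp add: algebra_simps power2_eq_square)
  also have "\<dots> = m * M\<^sup>2 - m * k\<^sup>2 + ml * xl\<^sup>2 + mr * xr\<^sup>2"
  proof -
    have "ml * xl + mr * xr = - (k * m)"
      using assms(4) by linarith
    then show ?thesis
      unfolding assms(1) by (simp add: power2_eq_square algebra_simps)
  qed
  also have "\<dots> \<le> m * M\<^sup>2 + ml * B\<^sup>2 + mr * B\<^sup>2"
  proof -
    have "xl\<^sup>2 \<le> B\<^sup>2" "xr\<^sup>2 \<le> B\<^sup>2"
      using assms(5,6) by (metis abs_ge_zero power2_abs power_mono)+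
    then have "ml * xl\<^sup>2 \<le> ml * B\<^sup>2" "mr * xr\<^sup>2 \<le> mr * B\<^sup>2"
      using assms(2,3) by (simp_all add: mult_left_mono)
    moreover have "0 \<le> m * k\<^sup>2"
      using assms(1-3) by simp
    ultimately show ?thesis
      by linarith
  qed
  also have "\<dots> = m * M\<^sup>2 + m * B\<^sup>2"
    using assms(1) distrib_right[of ml mr "B\<^sup>2"] by simp
  finally show ?thesis .
qed

lemma sum_le_enn2real_nn_integral_count_space:
  fixes g :: "'a \<Rightarrow> real"
  assumes "finite F" "F \<subseteq> X" "\<And>x. 0 \<le> g x" "(\<integral>\<^sup>+ x. ennreal (g x) \<partial>count_space X) < \<infinity>"
  shows "(\<Sum>x\<in>F. g x) \<le> enn2real (\<integral>\<^sup>+ x. ennreal (g x) \<partial>count_space X)"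
proof -
  have "ennreal (\<Sum>x\<in>F. g x) = (\<integral>\<^sup>+ x. ennreal (g x) \<partial>count_space F)"
    using assms(1,3) by (simp add: nn_integral_count_space_finite)
  also have "\<dots> = (\<integral>\<^sup>+ x. ennreal (g x) * indicator F x \<partial>count_space UNIV)"
    by (rule nn_integral_count_space_indicator) (simp add: NO_MATCH_def)
  also have "\<dots> \<le> (\<integral>\<^sup>+ x. ennreal (g x) * indicator X x \<partial>count_space UNIV)"
    using assms(2) by (intro nn_integral_mono) (auto split: split_indicator)
  also have "\<dots> = (\<integral>\<^sup>+ x. ennreal (g x) \<partial>count_space X)"
    by (rule nn_integral_count_space_indicator[symmetric]) (simp add: NO_MATCH_def)
  finally have "ennreal (\<Sum>x\<in>F. g x) \<le> (\<integral>\<^sup>+ x. ennreal (g x) \<partial>count_space X)" .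
  then have "enn2real (ennreal (\<Sum>x\<in>F. g x)) \<le> enn2real (\<integral>\<^sup>+ x. ennreal (g x) \<partial>count_space X)"
    using assms(4) by (intro enn2real_mono) auto
  then show ?thesis
    using assms(3) by (simp add: sum_nonneg)
qed

lemma sets_measure_add: "sets (measure_add M N) = sets M"
  unfolding measure_add_def by (rule sigma_algebra.sets_measure_of_eq[OF sets.sigma_algebra_axioms])

lemma emeasure_measure_add:
  assumes "sets N = sets M" "A \<in> sets M"
  shows "emeasure (measure_add M N) A = emeasure M A + emeasure N A"
  unfolding measure_add_def
proof (rule emeasure_measure_of_sigma[OF sets.sigma_algebra_axioms _ _ assms(2)])
  show "positive (sets M) (\<lambda>A. emeasure M A + emeasure N A)"
    by (simp add: positive_def)
  show "countably_additive (sets M) (\<lambda>A. emeasure M A + emeasure N A)"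
  proof (rule countably_additiveI)
    fix F :: "nat \<Rightarrow> _"
    assume F: "range F \<subseteq> sets M" "disjoint_family F"
    then have "range F \<subseteq> sets N"
      using assms(1) by simp
    with F show "(\<Sum>i. emeasure M (F i) + emeasure N (F i))
        = emeasure M (\<Union>i. F i) + emeasure N (\<Union>i. F i)"
      by (simp add: suminf_add[symmetric] suminf_emeasure)
  qed
qed

lemma absolutely_continuous_restrI:
  assumes "sets N = sets M" "A \<in> sets M" "\<And>X. X \<in> null_sets N \<Longrightarrow> A \<inter> X \<in> null_sets M"
  shows "absolutely_continuous N (restr M A)"
  unfolding absolutely_continuous_def
proof
  fix X
  assume X: "X \<in> null_sets N"
  then have "X \<in> sets M"
    using assms(1) null_setsD2 by blast
  with assms(2) assms(3)[OF X] show "X \<in> null_sets (restr M A)"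
    by (simp add: restr_def null_sets_def emeasure_restricted)
qed

lemma tree_boundary_borel: "tree_boundary T \<in> sets borel"
  unfolding tree_boundary_def by (intro sets.Diff sets.countable_UN') auto

section \<open>The log-likelihood martingale\<close>

fun ancestor_sum :: "(nat \<times> nat \<Rightarrow> real) \<Rightarrow> nat \<Rightarrow> nat \<times> nat \<Rightarrow> real" where
  "ancestor_sum g 0 I = 0"
| "ancestor_sum g (Suc n) I = ancestor_sum g n (dparent I) + g (dparent I)"

locale doubling_tree_measures =
  fixes \<mu> \<nu> :: "real measure" and T :: "(nat \<times> nat) set" and D :: real
  assumes tree: "is_tree T"
    and sets_mu: "sets \<mu> = sets borel" and finite_mu: "finite_measure \<mu>"
    and sets_nu: "sets \<nu> = sets borel" and finite_nu: "finite_measure \<nu>"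
    and top_pos: "measure \<mu> (dyset (tree_top T)) > 0" "measure \<nu> (dyset (tree_top T)) > 0"
    and D: "D \<ge> 1" and doubling: "doubling_on_tree \<mu> T D" "doubling_on_tree \<nu> T D"
begin

abbreviation "mu I \<equiv> measure \<mu> (dyset I)"
abbreviation "nu I \<equiv> measure \<nu> (dyset I)"
abbreviation "Tp \<equiv> tree_top T"
abbreviation "L \<equiv> leaves T"
abbreviation "square_sum \<equiv> \<integral>\<^sup>+ I. ennreal ((Delta \<mu> \<nu> I)\<^sup>2 * mu I) \<partial>count_space (T - L)"

text \<open>\<open>kl_div I\<close> is the expected decrease of \<open>log_ratio\<close> from \<open>I\<close> to its children under \<open>\<mu>\<close>;
  summing it over the strict ancestors makes \<open>martingale\<close> a \<open>\<mu>\<close>-martingale along the tree.\<close>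

definition log_ratio :: "nat \<times> nat \<Rightarrow> real" where
  "log_ratio I = ln (nu I) - ln (mu I) - (ln (nu Tp) - ln (mu Tp))"

definition kl_div :: "nat \<times> nat \<Rightarrow> real" where
  "kl_div I = -(mu (dleft I) * (log_ratio (dleft I) - log_ratio I)
      + mu (dright I) * (log_ratio (dright I) - log_ratio I)) / mu I"

definition compensator :: "nat \<times> nat \<Rightarrow> real" where
  "compensator I = ancestor_sum kl_div (fst I - fst Tp) I"

definition martingale :: "nat \<times> nat \<Rightarrow> real" where
  "martingale I = log_ratio I + compensator I"

definition energy :: "nat \<Rightarrow> real" where
  "energy n = (\<Sum>k<n. \<Sum>J\<in>generation T k - L. mu J * (Delta \<mu> \<nu> J)\<^sup>2)"

lemma D_pos: "0 < D"
  using D by simp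

lemma dyset_sets: "dyset I \<in> sets \<mu>" "dyset I \<in> sets \<nu>"
  using dyset_borel by (simp_all add: sets_mu sets_nu)

lemma mu_pos: "I \<in> T \<Longrightarrow> mu I > 0"
  using doubling_tree_measure_pos[OF tree doubling(1) top_pos(1)] .

lemma nu_pos: "I \<in> T \<Longrightarrow> nu I > 0"
  using doubling_tree_measure_pos[OF tree doubling(2) top_pos(2)] .

lemma mu_split: "mu I = mu (dleft I) + mu (dright I)"
  using arg_cong[OF dyset_dleft_Un_dright, of "measure \<mu>" I]
    finite_measure.finite_measure_Union[OF finite_mu dyset_sets(1) dyset_sets(1)
      dyset_dleft_Int_dright]
  by (rule trans)

lemma nu_split: "nu I = nu (dleft I) + nu (dright I)"
  using arg_cong[OF dyset_dleft_Un_dright, of "measure \<nu>" I]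
    finite_measure.finite_measure_Union[OF finite_nu dyset_sets(2) dyset_sets(2)
      dyset_dleft_Int_dright]
  by (rule trans)

lemma martingale_top: "martingale Tp = 0"
  by (simp add: martingale_def log_ratio_def compensator_def)

lemma compensator_children:
  assumes "J \<in> T"
  shows "compensator (dleft J) = compensator J + kl_div J"
    "compensator (dright J) = compensator J + kl_div J"
proof -
  have "fst (dleft J) - fst Tp = Suc (fst J - fst Tp)"
    and "fst (dright J) - fst Tp = Suc (fst J - fst Tp)"
    using tree_level_ge_top[OF tree assms] by auto
  then show "compensator (dleft J) = compensator J + kl_div J"
    "compensator (dright J) = compensator J + kl_div J"
    unfolding compensator_def by simp_all
qed

lemma node_ratios:
  assumes J: "J \<in> T - L"
  defines "a \<equiv> mu (dleft J) / mu J" and "b \<equiv> nu (dleft J) / nu J"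
  shows "1 / D \<le> a" "1 / D \<le> 1 - a" "1 / D \<le> b" "1 / D \<le> 1 - b"
    and "Delta \<mu> \<nu> J = \<bar>a - b\<bar>"
    and "log_ratio (dleft J) - log_ratio J = ln b - ln a"
    and "log_ratio (dright J) - log_ratio J = ln (1 - b) - ln (1 - a)"
    and "kl_div J = -(a * (ln b - ln a) + (1 - a) * (ln (1 - b) - ln (1 - a)))"
proof -
  have children: "dleft J \<in> T" "dright J \<in> T"
    using tree_children_in[OF tree J] by auto
  have "fst Tp \<le> fst J"
    using J tree_level_ge_top[OF tree] by blast
  then have not_top: "dleft J \<noteq> Tp" "dright J \<noteq> Tp"
    by (auto dest: arg_cong[of _ _ fst])
  have dbl: "mu J \<le> D * mu (dleft J)" "mu J \<le> D * mu (dright J)"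
    "nu J \<le> D * nu (dleft J)" "nu J \<le> D * nu (dright J)"
    using doubling children not_top unfolding doubling_on_tree_def
    by (metis DiffI dparent_dleft dparent_dright singletonD)+
  have pm: "mu J > 0" "mu (dleft J) > 0" "mu (dright J) > 0"
    and pn: "nu J > 0" "nu (dleft J) > 0" "nu (dright J) > 0"
    using mu_pos nu_pos J children by auto
  have a1: "1 - a = mu (dright J) / mu J"
    unfolding a_def using mu_split[of J] pm by (simp add: field_simps)
  have b1: "1 - b = nu (dright J) / nu J"
    unfolding b_def using nu_split[of J] pn by (simp add: field_simps)
  show "1 / D \<le> a" "1 / D \<le> 1 - a" "1 / D \<le> b" "1 / D \<le> 1 - b"
    unfolding a1 b1 unfolding a_def b_def using dbl pm pn D_pos by (simp_all add: field_simps)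
  show "Delta \<mu> \<nu> J = \<bar>a - b\<bar>"
    unfolding Delta_def a_def b_def ..
  show xl: "log_ratio (dleft J) - log_ratio J = ln b - ln a"
    unfolding log_ratio_def a_def b_def using pm pn by (simp add: ln_div)
  show xr: "log_ratio (dright J) - log_ratio J = ln (1 - b) - ln (1 - a)"
    unfolding log_ratio_def a1 b1 using pm pn by (simp add: ln_div)
  show "kl_div J = -(a * (ln b - ln a) + (1 - a) * (ln (1 - b) - ln (1 - a)))"
    unfolding kl_div_def xl xr a1 unfolding a_def using pm by (simp add: field_simps)
qed

lemma kl_div_bounds:
  assumes "J \<in> T - L"
  shows "0 \<le> kl_div J" "kl_div J \<le> D\<^sup>2 * (Delta \<mu> \<nu> J)\<^sup>2"
  using binary_kl_bounds(3,4)[OF D_pos node_ratios(1-4)[OF assms]] node_ratios(5,8)[OF assms]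
  by simp_all

lemma martingale_increment:
  assumes J: "J \<in> T - L"
  shows "mu (dleft J) * (martingale (dleft J))\<^sup>2 + mu (dright J) * (martingale (dright J))\<^sup>2
      \<le> mu J * (martingale J)\<^sup>2 + D\<^sup>2 * (mu J * (Delta \<mu> \<nu> J)\<^sup>2)"
proof -
  let ?xl = "log_ratio (dleft J) - log_ratio J" and ?xr = "log_ratio (dright J) - log_ratio J"
  have left: "martingale (dleft J) = martingale J + ?xl + kl_div J"
    and right: "martingale (dright J) = martingale J + ?xr + kl_div J"
    using J unfolding martingale_def compensator_children[OF DiffD1[OF J]] by simp_all
  have "mu J > 0"
    using mu_pos J by blast
  then have centred: "kl_div J * mu J = -(mu (dleft J) * ?xl + mu (dright J) * ?xr)"
    unfolding kl_div_def by simp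
  have "\<bar>?xl\<bar> \<le> D * Delta \<mu> \<nu> J" "\<bar>?xr\<bar> \<le> D * Delta \<mu> \<nu> J"
    using binary_kl_bounds(1,2)[OF D_pos node_ratios(1-4)[OF J]]
    unfolding node_ratios(5-7)[OF J] by simp_all
  then have "mu (dleft J) * (martingale (dleft J))\<^sup>2 + mu (dright J) * (martingale (dright J))\<^sup>2
      \<le> mu J * (martingale J)\<^sup>2 + mu J * (D * Delta \<mu> \<nu> J)\<^sup>2"
    unfolding left right
    by (intro square_increment_le[OF mu_split[symmetric] measure_nonneg measure_nonneg centred])
  moreover have "mu J * (D * Delta \<mu> \<nu> J)\<^sup>2 = D\<^sup>2 * (mu J * (Delta \<mu> \<nu> J)\<^sup>2)"
    by (simp add: power_mult_distrib)
  ultimately show ?thesis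
    by linarith
qed

lemma compensator_increment:
  assumes "J \<in> T - L"
  shows "mu (dleft J) * compensator (dleft J) + mu (dright J) * compensator (dright J)
      = mu J * compensator J + mu J * kl_div J"
  using assms mu_split[of J] by (simp add: compensator_children algebra_simps)

lemma generation_in_tree: "J \<in> generation T n \<Longrightarrow> J \<in> T"
  using generation_subset[OF tree] by blast

lemma compensator_nonneg: "J \<in> generation T n \<Longrightarrow> 0 \<le> compensator J"
proof (induction n arbitrary: J)
  case 0
  then show ?case
    by (simp add: compensator_def)
next
  case (Suc n)
  obtain I where I: "I \<in> generation T n"
    "(I \<in> L \<and> J = I) \<or> (I \<notin> L \<and> (J = dleft I \<or> J = dright I))"
    using Suc.prems by (rule generation_SucE)
  have "0 \<le> compensator I"
    using Suc.IH[OF I(1)] .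
  moreover have "0 \<le> kl_div I" if "I \<notin> L"
    using kl_div_bounds(1) generation_in_tree[OF I(1)] that by blast
  ultimately show ?case
    using I(2) compensator_children[OF generation_in_tree[OF I(1)]] by auto
qed

lemma sum_generation_le_energy:
  assumes "\<And>J. J \<in> T - L \<Longrightarrow> \<phi> (dleft J) + \<phi> (dright J) \<le> \<phi> J + D\<^sup>2 * (mu J * (Delta \<mu> \<nu> J)\<^sup>2)"
  shows "(\<Sum>J\<in>generation T n. \<phi> J) \<le> \<phi> Tp + D\<^sup>2 * energy n"
proof (induction n)
  case 0
  then show ?case
    by (simp add: energy_def)
next
  case (Suc n)
  have "(\<Sum>J\<in>generation T n - L. \<phi> (dleft J) + \<phi> (dright J) - \<phi> J)
      \<le> (\<Sum>J\<in>generation T n - L. D\<^sup>2 * (mu J * (Delta \<mu> \<nu> J)\<^sup>2))"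
  proof (rule sum_mono)
    fix J
    assume "J \<in> generation T n - L"
    then have "J \<in> T - L"
      using generation_in_tree by blast
    from assms[OF this] show "\<phi> (dleft J) + \<phi> (dright J) - \<phi> J \<le> D\<^sup>2 * (mu J * (Delta \<mu> \<nu> J)\<^sup>2)"
      by simp
  qed
  then show ?case
    using Suc.IH unfolding sum_generation_Suc
    by (simp add: energy_def sum_distrib_left distrib_left)
qed

lemma martingale_energy: "(\<Sum>J\<in>generation T n. mu J * (martingale J)\<^sup>2) \<le> D\<^sup>2 * energy n"
  using sum_generation_le_energy[of "\<lambda>J. mu J * (martingale J)\<^sup>2", OF martingale_increment]
  by (simp add: martingale_top)

lemma compensator_energy: "(\<Sum>J\<in>generation T n. mu J * compensator J) \<le> D\<^sup>2 * energy n"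
proof -
  have "mu (dleft J) * compensator (dleft J) + mu (dright J) * compensator (dright J)
      \<le> mu J * compensator J + D\<^sup>2 * (mu J * (Delta \<mu> \<nu> J)\<^sup>2)" if "J \<in> T - L" for J
    using mult_left_mono[OF kl_div_bounds(2)[OF that] measure_nonneg]
    unfolding compensator_increment[OF that] by (simp add: algebra_simps)
  from sum_generation_le_energy[of "\<lambda>J. mu J * compensator J", OF this] show ?thesis
    by (simp add: compensator_def)
qed

lemma energy_le_square_sum:
  assumes "square_sum < \<infinity>"
  shows "energy n \<le> enn2real square_sum"
proof -
  have disjoint: "(generation T i - L) \<inter> (generation T j - L) = {}" if "i \<noteq> j" for i j
  proof -
    have "fst J = fst Tp + i" "fst J = fst Tp + j"
      if "J \<in> generation T i - L" "J \<in> generation T j - L" for J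
      using that generation_level(2) by blast+
    with \<open>i \<noteq> j\<close> show ?thesis
      by fastforce
  qed
  have "energy n = (\<Sum>k<n. \<Sum>J\<in>generation T k - L. (Delta \<mu> \<nu> J)\<^sup>2 * mu J)"
    unfolding energy_def by (simp add: mult.commute)
  also have "\<dots> = (\<Sum>J\<in>(\<Union>k<n. generation T k - L). (Delta \<mu> \<nu> J)\<^sup>2 * mu J)"
    by (rule sum.UNION_disjoint[symmetric]) (simp_all add: finite_generation disjoint)
  also have "\<dots> \<le> enn2real square_sum"
    using assms generation_in_tree
    by (intro sum_le_enn2real_nn_integral_count_space) (auto simp: finite_generation)
  finally show ?thesis .
qed

lemma low_log_ratio_mass:
  assumes "t > 0"
  shows "(\<Sum>J\<in>{J\<in>generation T n. log_ratio J < -2 * t}. mu J)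
      \<le> D\<^sup>2 * energy n / t\<^sup>2 + D\<^sup>2 * energy n / t"
proof -
  define f where "f J = mu J * (martingale J)\<^sup>2 / t\<^sup>2 + mu J * compensator J / t" for J
  have f_nonneg: "0 \<le> f J" if "J \<in> generation T n" for J
    unfolding f_def using assms compensator_nonneg[OF that] by simp
  \<comment> \<open>where the log-ratio is low, either the compensator or the martingale is large\<close>
  have low: "mu J \<le> f J" if "J \<in> generation T n" "log_ratio J < -2 * t" for J
  proof (cases "t \<le> compensator J")
    case True
    then have "mu J * 1 \<le> mu J * (compensator J / t)"
      using assms by (intro mult_left_mono) auto
    then show ?thesis
      using f_nonneg[OF that(1)] unfolding f_def by (simp add: add_increasing)
  next
    case False
    then have "t \<le> \<bar>martingale J\<bar>"
      using that(2) unfolding martingale_def by simp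
    then have "t\<^sup>2 \<le> (martingale J)\<^sup>2"
      using assms by (metis abs_of_pos power2_abs power_mono less_imp_le)
    then have "mu J * 1 \<le> mu J * ((martingale J)\<^sup>2 / t\<^sup>2)"
      using assms by (intro mult_left_mono) auto
    then show ?thesis
      using assms compensator_nonneg[OF that(1)] unfolding f_def by (simp add: add_increasing2)
  qed
  have "(\<Sum>J\<in>{J\<in>generation T n. log_ratio J < -2 * t}. mu J)
      \<le> (\<Sum>J\<in>{J\<in>generation T n. log_ratio J < -2 * t}. f J)"
    using low by (intro sum_mono) auto
  also have "\<dots> \<le> (\<Sum>J\<in>generation T n. f J)"
    using f_nonneg by (intro sum_mono2) (auto simp: finite_generation)
  also have "\<dots> = (\<Sum>J\<in>generation T n. mu J * (martingale J)\<^sup>2) / t\<^sup>2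
      + (\<Sum>J\<in>generation T n. mu J * compensator J) / t"
    unfolding f_def by (simp add: sum.distrib sum_divide_distrib)
  also have "\<dots> \<le> D\<^sup>2 * energy n / t\<^sup>2 + D\<^sup>2 * energy n / t"
    using martingale_energy compensator_energy assms
    by (intro add_mono divide_right_mono) auto
  finally show ?thesis .
qed

section \<open>Null sets of the boundary\<close>

lemma measure_hitting_generation_tendsto:
  assumes K: "closed K" "K \<subseteq> tree_boundary T" "measure \<nu> K = 0"
  shows "(\<lambda>n. measure \<nu> (\<Union>(dyset ` hitting_generation T K n))) \<longlonglongrightarrow> 0"
proof -
  interpret nu: finite_measure \<nu>
    by (rule finite_nu)
  have "\<Union>(dyset ` hitting_generation T K n) \<in> sets \<nu>" for n
    by (intro sets.finite_UN) (auto simp: finite_hitting_generation dyset_sets)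
  then have "(\<lambda>n. measure \<nu> (\<Union>(dyset ` hitting_generation T K n)))
      \<longlonglongrightarrow> measure \<nu> (\<Inter>n. \<Union>(dyset ` hitting_generation T K n))"
    by (intro nu.finite_Lim_measure_decseq decseq_hitting_generation) auto
  moreover have "measure \<nu> (\<Inter>n. \<Union>(dyset ` hitting_generation T K n)) \<le> measure \<nu> K"
    using Inter_hitting_generation_subset[OF K(1,2)] K(1)
    by (intro nu.finite_measure_mono) (auto simp: sets_nu borel_closed)
  ultimately show ?thesis
    using K(3) measure_nonneg[of \<nu>] by (metis antisym)
qed

lemma mu_le_nu_of_log_ratio_ge:
  assumes "J \<in> T" "-2 * t \<le> log_ratio J"
  shows "mu J \<le> exp (2 * t) * (mu Tp / nu Tp) * nu J"
proof -
  have pos: "mu J > 0" "nu J > 0" "mu Tp > 0" "nu Tp > 0"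
    using assms(1) top_pos mu_pos nu_pos by auto
  have "ln (mu J) \<le> ln (exp (2 * t) * (mu Tp / nu Tp) * nu J)"
    using assms(2) pos unfolding log_ratio_def by (simp add: ln_mult ln_div)
  then show ?thesis
    using pos by simp
qed

lemma boundary_measure_le:
  assumes K: "K \<in> sets borel" "K \<subseteq> tree_boundary T" and "t > 0"
  shows "measure \<mu> K \<le> D\<^sup>2 * energy n / t\<^sup>2 + D\<^sup>2 * energy n / t
    + exp (2 * t) * (mu Tp / nu Tp) * measure \<nu> (\<Union>(dyset ` hitting_generation T K n))"
proof -
  interpret mu: finite_measure \<mu>
    by (rule finite_mu)
  interpret nu: finite_measure \<nu>
    by (rule finite_nu)
  let ?H = "hitting_generation T K n" and ?low = "{J. log_ratio J < -2 * t}"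
    and ?c = "exp (2 * t) * (mu Tp / nu Tp)"
  have H: "finite ?H" "?H \<subseteq> generation T n"
    by (simp_all add: finite_hitting_generation) (auto simp: hitting_generation_def)
  have c: "0 \<le> ?c"
    by simp
  have "measure \<mu> K \<le> measure \<mu> (\<Union>(dyset ` ?H))"
    using subset_hitting_generation[OF tree K(2)] K(1) H(1)
    by (intro mu.finite_measure_mono) (auto simp: sets_mu)
  also have "\<dots> \<le> (\<Sum>J\<in>?H. mu J)"
    using H(1) by (intro mu.finite_measure_subadditive_finite) (auto simp: dyset_sets)
  also have "\<dots> = (\<Sum>J\<in>?H \<inter> ?low. mu J) + (\<Sum>J\<in>?H - ?low. mu J)"
    using H(1) by (rule sum.Int_Diff)
  also have "(\<Sum>J\<in>?H \<inter> ?low. mu J) \<le> (\<Sum>J\<in>{J\<in>generation T n. log_ratio J < -2 * t}. mu J)"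
    using H by (intro sum_mono2) (auto simp: finite_generation)
  also have "\<dots> \<le> D\<^sup>2 * energy n / t\<^sup>2 + D\<^sup>2 * energy n / t"
    by (rule low_log_ratio_mass[OF \<open>t > 0\<close>])
  also have "(\<Sum>J\<in>?H - ?low. mu J) \<le> (\<Sum>J\<in>?H - ?low. ?c * nu J)"
    using H(2) generation_in_tree by (intro sum_mono mu_le_nu_of_log_ratio_ge) auto
  also have "\<dots> \<le> (\<Sum>J\<in>?H. ?c * nu J)"
    using H(1) c by (intro sum_mono2) auto
  also have "\<dots> = ?c * measure \<nu> (\<Union>(dyset ` ?H))"
  proof -
    have "disjoint_family_on dyset ?H"
      using H(2) generation_disjoint unfolding disjoint_family_on_def by blast
    then have "measure \<nu> (\<Union>(dyset ` ?H)) = (\<Sum>J\<in>?H. nu J)"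
      using H(1) by (intro nu.finite_measure_finite_Union) (auto simp: dyset_sets)
    then show ?thesis
      by (simp add: sum_distrib_left)
  qed
  finally show ?thesis
    by simp
qed

lemma closed_boundary_null:
  assumes sq: "square_sum < \<infinity>" and K: "closed K" "K \<subseteq> tree_boundary T" "measure \<nu> K = 0"
  shows "measure \<mu> K = 0"
proof -
  define S where "S = enn2real square_sum"
  have energy_le: "D\<^sup>2 * energy n \<le> D\<^sup>2 * S" for n
    unfolding S_def using energy_le_square_sum[OF sq] by (simp add: mult_left_mono)
  have bound: "measure \<mu> K \<le> D\<^sup>2 * S / t\<^sup>2 + D\<^sup>2 * S / t" if "t > 0" for t
  proof (rule LIMSEQ_le_const)
    let ?c = "exp (2 * t) * (mu Tp / nu Tp)"
    show "(\<lambda>n. D\<^sup>2 * S / t\<^sup>2 + D\<^sup>2 * S / t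
        + ?c * measure \<nu> (\<Union>(dyset ` hitting_generation T K n))) \<longlonglongrightarrow> D\<^sup>2 * S / t\<^sup>2 + D\<^sup>2 * S / t"
      using tendsto_add[OF tendsto_const[of "D\<^sup>2 * S / t\<^sup>2 + D\<^sup>2 * S / t"]
          tendsto_mult_left[OF measure_hitting_generation_tendsto[OF K], of ?c]]
      by simp
    have "measure \<mu> K \<le> D\<^sup>2 * S / t\<^sup>2 + D\<^sup>2 * S / t
        + ?c * measure \<nu> (\<Union>(dyset ` hitting_generation T K n))" for n
    proof -
      have "D\<^sup>2 * energy n / t\<^sup>2 \<le> D\<^sup>2 * S / t\<^sup>2" "D\<^sup>2 * energy n / t \<le> D\<^sup>2 * S / t"
        using energy_le[of n] that by (auto intro: divide_right_mono)
      then show ?thesis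
        using boundary_measure_le[OF _ K(2) that, of n] K(1) by (simp add: borel_closed)
    qed
    then show "\<exists>N. \<forall>n\<ge>N. measure \<mu> K \<le> D\<^sup>2 * S / t\<^sup>2 + D\<^sup>2 * S / t
        + ?c * measure \<nu> (\<Union>(dyset ` hitting_generation T K n))"
      by blast
  qed
  have "((\<lambda>t. D\<^sup>2 * S / t\<^sup>2 + D\<^sup>2 * S / t) \<longlongrightarrow> 0) at_top"
    by (intro tendsto_add_zero tendsto_divide_0[OF tendsto_const] filterlim_at_top_imp_at_infinity
        filterlim_pow_at_top filterlim_ident) simp
  then have "measure \<mu> K \<le> 0"
    by (rule tendsto_lowerbound) (auto intro: eventually_mono[OF eventually_gt_at_top[of 0]] bound)
  then show ?thesis
    using measure_nonneg[of \<mu> K] by linarith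
qed

lemma boundary_null_sets:
  assumes sq: "square_sum < \<infinity>" and E: "E \<in> null_sets \<nu>" "E \<subseteq> tree_boundary T"
  shows "E \<in> null_sets \<mu>"
proof -
  have E_borel: "E \<in> sets borel"
    using null_setsD2[OF E(1)] sets_nu by simp
  have compact_null: "emeasure \<mu> K = 0" if "K \<in> {K. K \<subseteq> E \<and> compact K}" for K
  proof -
    have K: "K \<subseteq> E" "closed K"
      using that compact_imp_closed by auto
    then have "K \<in> sets \<nu>"
      by (simp add: sets_nu borel_closed)
    then have "measure \<nu> K = 0"
      using null_sets_subset[OF E(1) _ K(1)] by (simp add: measure_eq_0_null_sets)
    with K E(2) have "measure \<mu> K = 0"
      by (intro closed_boundary_null[OF sq]) auto
    then show ?thesis
      using finite_measure.emeasure_eq_measure[OF finite_mu, of K] by simp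
  qed
  interpret mu: finite_measure \<mu>
    by (rule finite_mu)
  have "emeasure \<mu> E = (SUP K \<in> {K. K \<subseteq> E \<and> compact K}. emeasure \<mu> K)"
    by (rule inner_regular[OF sets_mu _ E_borel]) simp
  also have "\<dots> = (SUP K \<in> {K. K \<subseteq> E \<and> compact K}. 0)"
    using compact_null by (intro SUP_cong) auto
  also have "\<dots> = 0"
    by (rule SUP_const) (use compact_empty in blast)
  finally show ?thesis
    using E_borel by (simp add: null_sets_def sets_mu)
qed

definition leaf_density :: "real \<Rightarrow> ennreal" where
  "leaf_density x = (\<integral>\<^sup>+ I. ennreal (nu I / mu I) * indicator (dyset I) x \<partial>count_space L)"

lemma nu_T_eq: "nu_T \<mu> \<nu> T = measure_add (restr \<nu> (tree_boundary T)) (density \<mu> leaf_density)"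
  unfolding nu_T_def leaf_density_def ..

lemma borel_measurable_leaf_density: "leaf_density \<in> borel_measurable \<mu>"
proof -
  have countable: "countable L"
    by simp
  interpret leaves: sigma_finite_measure "count_space L"
    by (rule sigma_finite_measure_count_space_countable[OF countable])
  have "(\<lambda>p. (\<lambda>I p. ennreal (nu I / mu I) * indicator (dyset I) (fst p)) (snd p) p)
      \<in> borel_measurable (\<mu> \<Otimes>\<^sub>M count_space L)"
  proof (rule measurable_compose_countable'[OF _ _ countable])
    fix I
    have "dyset I \<in> sets \<mu>"
      by (rule dyset_sets(1))
    then show "(\<lambda>p. ennreal (nu I / mu I) * indicator (dyset I) (fst p))
        \<in> borel_measurable (\<mu> \<Otimes>\<^sub>M count_space L)"
      by measurable
  qed simp
  then have "case_prod (\<lambda>x I. ennreal (nu I / mu I) * indicator (dyset I) x)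
      \<in> borel_measurable (\<mu> \<Otimes>\<^sub>M count_space L)"
    by (simp add: case_prod_beta')
  from leaves.borel_measurable_nn_integral[OF this] show ?thesis
    unfolding leaf_density_def .
qed

lemma null_sets_nu_T:
  assumes X: "X \<in> null_sets (nu_T \<mu> \<nu> T)"
  shows "tree_boundary T \<inter> X \<in> null_sets \<nu>" "I \<in> L \<Longrightarrow> dyset I \<inter> X \<in> null_sets \<mu>"
proof -
  have X_borel: "X \<in> sets borel"
    using null_setsD2[OF X] sets_nu by (simp add: nu_T_eq sets_measure_add restr_def)
  have "emeasure (restr \<nu> (tree_boundary T)) X + emeasure (density \<mu> leaf_density) X = 0"
    using X X_borel unfolding nu_T_eq
    by (subst emeasure_measure_add[symmetric]) (auto simp: restr_def sets_mu sets_nu)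
  then have restr0: "emeasure (restr \<nu> (tree_boundary T)) X = 0"
    and density0: "emeasure (density \<mu> leaf_density) X = 0"
    by auto
  show "tree_boundary T \<inter> X \<in> null_sets \<nu>"
    using restr0 X_borel tree_boundary_borel unfolding restr_def
    by (simp add: emeasure_restricted null_sets_def sets_nu)
  assume I: "I \<in> L"
  have "ennreal (nu I / mu I) * emeasure \<mu> (dyset I \<inter> X)
      = (\<integral>\<^sup>+ x. ennreal (nu I / mu I) * indicator (dyset I \<inter> X) x \<partial>\<mu>)"
    using X_borel by (intro nn_integral_cmult_indicator[symmetric]) (simp add: sets_mu)
  also have "\<dots> \<le> (\<integral>\<^sup>+ x. leaf_density x * indicator X x \<partial>\<mu>)"
  proof (rule nn_integral_mono)
    fix x
    have "ennreal (nu I / mu I) * indicator (dyset I) x \<le> leaf_density x"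
      unfolding leaf_density_def
      by (rule nn_integral_ge_point[OF I, where p = "\<lambda>I. ennreal (nu I / mu I) * indicator (dyset I) x"])
    then show "ennreal (nu I / mu I) * indicator (dyset I \<inter> X) x \<le> leaf_density x * indicator X x"
      by (auto split: split_indicator)
  qed
  also have "\<dots> = 0"
    using density0 X_borel borel_measurable_leaf_density by (simp add: emeasure_density sets_mu)
  finally have "ennreal (nu I / mu I) * emeasure \<mu> (dyset I \<inter> X) = 0"
    by simp
  moreover have "I \<in> T"
    using I leaves_subset by blast
  ultimately have "emeasure \<mu> (dyset I \<inter> X) = 0"
    using mu_pos[of I] nu_pos[of I] by simp
  then show "dyset I \<inter> X \<in> null_sets \<mu>"
    using X_borel by (simp add: null_sets_def sets_mu)
qed

lemma dyset_top_null_sets: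
  assumes sq: "square_sum < \<infinity>" and X: "X \<in> null_sets (nu_T \<mu> \<nu> T)"
  shows "dyset Tp \<inter> X \<in> null_sets \<mu>"
proof -
  have X_borel: "X \<in> sets borel"
    using null_setsD2[OF X] sets_nu by (simp add: nu_T_eq sets_measure_add restr_def)
  have "(tree_boundary T \<inter> X) \<union> (\<Union>I\<in>L. dyset I \<inter> X) \<in> null_sets \<mu>"
    using boundary_null_sets[OF sq null_sets_nu_T(1)[OF X]] null_sets_nu_T(2)[OF X]
    by (intro null_sets.Un null_sets_UN') auto
  then show ?thesis
    by (rule null_sets_subset) (use X_borel in \<open>auto simp: tree_boundary_def sets_mu\<close>)
qed

end

theorem mainTheorem7:
  fixes \<mu> \<nu> :: "real measure" and T :: "(nat \<times> nat) set" and D :: real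
  assumes tree: "is_tree T"
    and mu_borel: "sets \<mu> = sets borel" and mu_fin: "finite_measure \<mu>"
    and mu_supp: "emeasure \<mu> (- {0..<1}) = 0"
    and nu_borel: "sets \<nu> = sets borel" and nu_fin: "finite_measure \<nu>"
    and nu_supp: "emeasure \<nu> (- {0..<1}) = 0"
    and A: "measure \<mu> (dyset (tree_top T)) > 0" "measure \<nu> (dyset (tree_top T)) > 0"
    and D: "D \<ge> 1" and B: "doubling_on_tree \<mu> T D" "doubling_on_tree \<nu> T D"
    and sq: "(\<integral>\<^sup>+ I. ennreal ((Delta \<mu> \<nu> I)\<^sup>2 * measure \<mu> (dyset I))
               \<partial>count_space (T - leaves T)) < \<infinity>"
  shows "absolutely_continuous (nu_T \<mu> \<nu> T) (restr \<mu> (dyset (tree_top T)))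
       \<and> absolutely_continuous \<nu> (restr \<mu> (tree_boundary T))"
proof -
  interpret doubling_tree_measures \<mu> \<nu> T D
    by (rule doubling_tree_measures.intro) (fact tree mu_borel mu_fin nu_borel nu_fin A D B)+
  have sets_nu_T: "sets (nu_T \<mu> \<nu> T) = sets \<mu>"
    by (simp add: nu_T_eq sets_measure_add restr_def mu_borel nu_borel)
  have boundary: "tree_boundary T \<inter> X \<in> null_sets \<mu>" if "X \<in> null_sets \<nu>" for X
    using boundary_null_sets[OF sq null_set_Int1[OF that]] tree_boundary_borel nu_borel by auto
  show ?thesis
  proof
    show "absolutely_continuous (nu_T \<mu> \<nu> T) (restr \<mu> (dyset (tree_top T)))"
      by (rule absolutely_continuous_restrI[OF sets_nu_T dyset_sets(1) dyset_top_null_sets[OF sq]])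
    show "absolutely_continuous \<nu> (restr \<mu> (tree_boundary T))"
      using tree_boundary_borel
      by (intro absolutely_continuous_restrI[OF _ _ boundary]) (simp_all add: mu_borel nu_borel)
  qed
qed

end
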